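(* Let $E=(A\subset B)\in\mathcal S$ have Klein tableau $\Pi=[\gamma^0,\ldots,\gamma^e;\varphi^2,\ldots,\varphi^e]$ and let $\ell\le e$ be a natural number. Then the embedding $E|^\ell=(A/p^\ell A\subset B/p^\ell A)$ has Klein tableau $$\Pi(E|^\ell)=[\gamma^0,\ldots,\gamma^\ell;\varphi^2,\ldots,\varphi^\ell]=\Pi|^\ell.$$
   Context: Let $R$ be a commutative principal ideal domain, $p$ a generator of a maximal ideal, $k=R/(p)$. A $p$-module is a finite-length $R$-module annihilated by some power of $p$. For a $p$-module $B$, $\mathrm{type}(B)$ is the partition $\beta$ with conjugate $\beta'_i=\dim_kp^{i-1}B/p^iB$. $\mathcal S$ is the category of embeddings $(A\subset B)$ of submodules in $p$-modules. Partitions are drawn with the $i$-th column of length equal to the $i$-th part, rows numbered from the top. Klein tableau of $E=(A\subset B)$, $e$ the exponent of $A$: $\Pi(E)=[\gamma^0,\ldots,\gamma^e;\varphi^2,\ldots,\varphi^e]$ with $\gamma^i=\mathrm{type}(B/p^iA)$, and $\varphi^\ell$ the unique map from the boxes of the skew diagram $\gamma^\ell\setminus\gamma^{\ell-1}$ to positive integers, weakly increasing from left to right in each row, such that for $r\ge1$ the number of boxes in row $m$ with value $r$ equals $(\gamma^{\ell,r})'_m-(\gamma^{\ell,r-1})'_m$, where $\gamma^{\ell,r}=\mathrm{type}\big(B/(p^\ell A+p(p^{\ell-2}A\cap p^rB))\big)$. For $\ell\le e$, the restriction is $\Pi|^\ell=[\gamma^0,\ldots,\gamma^\ell;\varphi^2,\ldots,\varphi^\ell]$.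 *)

theory Defs
  imports "HOL-Algebra.Algebra"
begin

definition pmult :: "('a, 'b) ring_scheme \<Rightarrow> ('a, 'c, 'd) module_scheme \<Rightarrow> 'a \<Rightarrow> nat \<Rightarrow> 'c set \<Rightarrow> 'c set"
  where "pmult R M p i U = (\<lambda>x. smult M (pow R p i) x) ` U"

definition quot_mod :: "('a, 'c, 'd) module_scheme \<Rightarrow> 'c set \<Rightarrow> ('a, 'c set) module"
  where "quot_mod M N = (undefined :: ('a, 'c set) module)
    \<lparr> carrier := A_RCOSETS M N,
      ring.zero := N,
      add := (\<lambda>U V. set_add M U V),
      smult := (\<lambda>r U. set_add M ((\<lambda>x. smult M r x) ` U) N) \<rparr>"

definition finite_length :: "('a, 'b) ring_scheme \<Rightarrow> ('a, 'c, 'd) module_scheme \<Rightarrow> bool"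
  where "finite_length R M \<longleftrightarrow> (\<exists>n. \<forall>(C :: nat \<Rightarrow> 'c set) k.
      (\<forall>j\<le>k. submodule (C j) R M) \<and> (\<forall>j<k. C j \<subset> C (Suc j)) \<longrightarrow> k \<le> n)"

definition p_module :: "('a, 'b) ring_scheme \<Rightarrow> 'a \<Rightarrow> ('a, 'c, 'd) module_scheme \<Rightarrow> bool"
  where "p_module R p M \<longleftrightarrow> module R M \<and> finite_length R M \<and>
      (\<exists>n. \<forall>x\<in>carrier M. smult M (pow R p (n::nat)) x = ring.zero M)"

text \<open>Linear independence over k = R/(p) of a finite set S of elements of a module annihilated
  by p (coefficients in k lifted to R), and the k-dimension.\<close>
definition k_indep :: "('a, 'b) ring_scheme \<Rightarrow> 'a \<Rightarrow> ('a, 'c, 'd) module_scheme \<Rightarrow> 'c set \<Rightarrow> bool"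
  where "k_indep R p M S \<longleftrightarrow> S \<subseteq> carrier M \<and>
     (\<forall>c \<in> S \<rightarrow> carrier R. finsum M (\<lambda>s. smult M (c s) s) S = ring.zero M \<longrightarrow> (\<forall>s\<in>S. c s \<in> cgenideal R p))"

definition k_dim :: "('a, 'b) ring_scheme \<Rightarrow> 'a \<Rightarrow> ('a, 'c, 'd) module_scheme \<Rightarrow> nat"
  where "k_dim R p M = (GREATEST n. \<exists>S. finite S \<and> card S = n \<and> k_indep R p M S)"

text \<open>A partition is a function nat => nat, parts indexed from 1 (value at 0 irrelevant / 0).
  Drawn with the i-th column of length the i-th part; the box in row m, column i is (m,i).\<close>
definition conjp :: "(nat \<Rightarrow> nat) \<Rightarrow> nat \<Rightarrow> nat"
  where "conjp \<alpha> j = card {i. 1 \<le> i \<and> j \<le> \<alpha> i}"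

definition boxes :: "(nat \<Rightarrow> nat) \<Rightarrow> (nat \<times> nat) set"
  where "boxes \<alpha> = {(m, i). 1 \<le> i \<and> 1 \<le> m \<and> m \<le> \<alpha> i}"

definition ptype :: "('a, 'b) ring_scheme \<Rightarrow> 'a \<Rightarrow> ('a, 'c, 'd) module_scheme \<Rightarrow> nat \<Rightarrow> nat"
  where "ptype R p M = conjp (\<lambda>i. if i = 0 then 0 else
      k_dim R p (quot_mod (M\<lparr>carrier := pmult R M p (i - 1) (carrier M)\<rparr>)
                          (pmult R M p i (carrier M))))"

definition expo :: "('a, 'b) ring_scheme \<Rightarrow> 'a \<Rightarrow> ('a, 'c, 'd) module_scheme \<Rightarrow> 'c set \<Rightarrow> nat"
  where "expo R p M A = (LEAST n. pmult R M p n A = {ring.zero M})"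

definition gam :: "('a, 'b) ring_scheme \<Rightarrow> 'a \<Rightarrow> ('a, 'c, 'd) module_scheme \<Rightarrow> 'c set \<Rightarrow> nat \<Rightarrow> nat \<Rightarrow> nat"
  where "gam R p M A i = ptype R p (quot_mod M (pmult R M p i A))"

definition gam2 :: "('a, 'b) ring_scheme \<Rightarrow> 'a \<Rightarrow> ('a, 'c, 'd) module_scheme \<Rightarrow> 'c set \<Rightarrow> nat \<Rightarrow> nat \<Rightarrow> nat \<Rightarrow> nat"
  where "gam2 R p M A l r = ptype R p (quot_mod M
      (set_add M (pmult R M p l A) (pmult R M p 1 (pmult R M p (l - 2) A \<inter> pmult R M p r (carrier M)))))"

definition skew :: "('a, 'b) ring_scheme \<Rightarrow> 'a \<Rightarrow> ('a, 'c, 'd) module_scheme \<Rightarrow> 'c set \<Rightarrow> nat \<Rightarrow> (nat \<times> nat) set"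
  where "skew R p M A l = boxes (gam R p M A l) - boxes (gam R p M A (l - 1))"

definition phi_ok :: "('a, 'b) ring_scheme \<Rightarrow> 'a \<Rightarrow> ('a, 'c, 'd) module_scheme \<Rightarrow> 'c set \<Rightarrow> nat \<Rightarrow> (nat \<times> nat \<Rightarrow> nat) \<Rightarrow> bool"
  where "phi_ok R p M A l \<phi> \<longleftrightarrow>
     (\<forall>b. b \<notin> skew R p M A l \<longrightarrow> \<phi> b = 0) \<and>
     (\<forall>b \<in> skew R p M A l. 0 < \<phi> b) \<and>
     (\<forall>m i j. (m, i) \<in> skew R p M A l \<and> (m, j) \<in> skew R p M A l \<and> i \<le> j \<longrightarrow> \<phi> (m, i) \<le> \<phi> (m, j)) \<and>
     (\<forall>r\<ge>1. \<forall>m\<ge>1. int (card {i. (m, i) \<in> skew R p M A l \<and> \<phi> (m, i) = r})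
          = int (conjp (gam2 R p M A l r) m) - int (conjp (gam2 R p M A l (r - 1)) m))"

definition phi :: "('a, 'b) ring_scheme \<Rightarrow> 'a \<Rightarrow> ('a, 'c, 'd) module_scheme \<Rightarrow> 'c set \<Rightarrow> nat \<Rightarrow> nat \<times> nat \<Rightarrow> nat"
  where "phi R p M A l = (THE \<phi>. phi_ok R p M A l \<phi>)"

definition klein :: "('a, 'b) ring_scheme \<Rightarrow> 'a \<Rightarrow> ('a, 'c, 'd) module_scheme \<Rightarrow> 'c set \<Rightarrow>
    (nat \<Rightarrow> nat) list \<times> (nat \<times> nat \<Rightarrow> nat) list"
  where "klein R p M A = (map (gam R p M A) [0..<expo R p M A + 1], map (phi R p M A) [2..<expo R p M A + 1])"

definition restr :: "('x list \<times> 'y list) \<Rightarrow> nat \<Rightarrow> ('x list \<times> 'y list)"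
  where "restr T l = (take (l + 1) (fst T), take (l - 1) (snd T))"

end

theory Submission
  imports Defs
begin

text \<open>Write N = p^l A. For i \<le> l every submodule W of B entering the definition of gamma^i or
  gamma^{i,r} contains N, and the corresponding submodule of B/N is its image W/N. By the third
  isomorphism theorem (B/N)/(W/N) is isomorphic to B/W, and types are isomorphism invariants, so
  the first l + 1 partitions and the first l - 1 maps of the two tableaux agree. It remains to see
  that A/N has exponent exactly l: if p^n A \<subseteq> p^l A with n < l, then
  p^n A = p^(n+1) A = ... = p^e A = 0, contradicting the minimality of the exponent e of A.\<close>

section \<open>Quotient modules\<close>

text \<open>Used to transfer the group structure of M A_Mod N to quot_mod M N, which has a different
  record type.\<close>

lemma comm_group_cong:
  assumes "comm_group G" "carrier H = carrier G" "monoid.mult H = monoid.mult G" "one H = one G"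
  shows "comm_group H"
proof -
  interpret G: comm_group G by fact
  show ?thesis
    by (rule comm_groupI) (auto simp: assms(2-4) intro: G.m_assoc G.m_comm G.l_inv_ex)
qed

context module
begin

lemma submoduleD:
  assumes "submodule N R M"
  shows "N \<subseteq> carrier M" "\<zero>\<^bsub>M\<^esub> \<in> N"
    "\<And>a b. a \<in> N \<Longrightarrow> b \<in> N \<Longrightarrow> a \<oplus>\<^bsub>M\<^esub> b \<in> N"
    "\<And>a. a \<in> N \<Longrightarrow> \<ominus>\<^bsub>M\<^esub> a \<in> N"
    "\<And>r a. r \<in> carrier R \<Longrightarrow> a \<in> N \<Longrightarrow> r \<odot>\<^bsub>M\<^esub> a \<in> N"
  using submoduleE[OF assms] subgroup.one_closed[OF submodule.axioms(1)[OF assms]] by auto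

lemma submodule_abelian_subgroup: "submodule N R M \<Longrightarrow> abelian_subgroup N M"
  by (rule abelian_subgroupI3[OF _ abelian_group_axioms])
     (simp add: additive_subgroup_def submodule.axioms(1))

lemma a_r_coset_eq: "N +>\<^bsub>M\<^esub> a = {n \<oplus>\<^bsub>M\<^esub> a | n. n \<in> N}"
  by (auto simp: a_r_coset_def')

lemma set_add_eq: "U <+>\<^bsub>M\<^esub> V = {u \<oplus>\<^bsub>M\<^esub> v | u v. u \<in> U \<and> v \<in> V}"
  by (auto simp: set_add_def')

lemma a_r_coset_subset: "submodule N R M \<Longrightarrow> a \<in> carrier M \<Longrightarrow> N +>\<^bsub>M\<^esub> a \<subseteq> carrier M"
  using submoduleD(1) by (auto simp: a_r_coset_eq)

lemma a_r_coset_eq_self_iff: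
  assumes "submodule N R M" "x \<in> carrier M"
  shows "N +>\<^bsub>M\<^esub> x = N \<longleftrightarrow> x \<in> N"
  using abelian_subgroup.a_rcos_const abelian_subgroup.a_rcos_self submodule_abelian_subgroup assms
  by metis

lemma smult_image_a_r_coset:
  assumes "submodule N R M" "a \<in> carrier M" "r \<in> carrier R"
  shows "(\<lambda>x. r \<odot>\<^bsub>M\<^esub> x) ` (N +>\<^bsub>M\<^esub> a) <+>\<^bsub>M\<^esub> N = N +>\<^bsub>M\<^esub> (r \<odot>\<^bsub>M\<^esub> a)"
proof (intro Set.set_eqI iffI)
  note N = submoduleD[OF assms(1)]
  fix x assume "x \<in> (\<lambda>x. r \<odot>\<^bsub>M\<^esub> x) ` (N +>\<^bsub>M\<^esub> a) <+>\<^bsub>M\<^esub> N"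
  then obtain n m where nm: "n \<in> N" "m \<in> N" "x = r \<odot>\<^bsub>M\<^esub> (n \<oplus>\<^bsub>M\<^esub> a) \<oplus>\<^bsub>M\<^esub> m"
    unfolding a_r_coset_eq set_add_eq by blast
  moreover have "n \<in> carrier M" "m \<in> carrier M" using nm N(1) by auto
  ultimately have "x = (r \<odot>\<^bsub>M\<^esub> n \<oplus>\<^bsub>M\<^esub> m) \<oplus>\<^bsub>M\<^esub> (r \<odot>\<^bsub>M\<^esub> a)"
    using assms by (simp add: a_ac smult_r_distr)
  moreover have "r \<odot>\<^bsub>M\<^esub> n \<oplus>\<^bsub>M\<^esub> m \<in> N" using nm N(3,5) assms(3) by simp
  ultimately show "x \<in> N +>\<^bsub>M\<^esub> (r \<odot>\<^bsub>M\<^esub> a)" unfolding a_r_coset_eq by blast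
next
  note N = submoduleD[OF assms(1)]
  fix x assume "x \<in> N +>\<^bsub>M\<^esub> (r \<odot>\<^bsub>M\<^esub> a)"
  then obtain n where n: "n \<in> N" "x = n \<oplus>\<^bsub>M\<^esub> (r \<odot>\<^bsub>M\<^esub> a)" unfolding a_r_coset_eq by blast
  then have "x = r \<odot>\<^bsub>M\<^esub> (\<zero>\<^bsub>M\<^esub> \<oplus>\<^bsub>M\<^esub> a) \<oplus>\<^bsub>M\<^esub> n" using N(1) assms by (auto simp: a_ac)
  moreover have "\<zero>\<^bsub>M\<^esub> \<oplus>\<^bsub>M\<^esub> a \<in> N +>\<^bsub>M\<^esub> a" unfolding a_r_coset_eq using N(2) by blast
  ultimately show "x \<in> (\<lambda>x. r \<odot>\<^bsub>M\<^esub> x) ` (N +>\<^bsub>M\<^esub> a) <+>\<^bsub>M\<^esub> N"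
    unfolding set_add_eq using n(1) by blast
qed

lemma quot_mod_carrier: "carrier (quot_mod M N) = {N +>\<^bsub>M\<^esub> a | a. a \<in> carrier M}"
  by (auto simp: quot_mod_def A_RCOSETS_def')

lemma quot_mod_add: "U \<oplus>\<^bsub>quot_mod M N\<^esub> V = U <+>\<^bsub>M\<^esub> V"
  by (simp add: quot_mod_def)

lemma quot_mod_zero: "\<zero>\<^bsub>quot_mod M N\<^esub> = N"
  by (simp add: quot_mod_def)

lemma quot_mod_smult: "r \<odot>\<^bsub>quot_mod M N\<^esub> U = (\<lambda>x. r \<odot>\<^bsub>M\<^esub> x) ` U <+>\<^bsub>M\<^esub> N"
  by (simp add: quot_mod_def)

lemma quot_mod_abelian_group:
  assumes "submodule N R M"
  shows "abelian_group (quot_mod M N)"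
proof -
  have "comm_group (M A_Mod N)"
    by (rule abelian_subgroup.a_factorgroup_is_comm_group[OF submodule_abelian_subgroup[OF assms]])
  then have "comm_group (add_monoid (quot_mod M N))"
    by (rule comm_group_cong)
       (simp_all add: quot_mod_def A_FactGroup_def FactGroup_def A_RCOSETS_def set_add_def)
  then show ?thesis
    unfolding abelian_group_def abelian_monoid_def abelian_group_axioms_def
    using comm_group.axioms(1) by blast
qed

lemma quot_mod_is_module:
  assumes "submodule N R M"
  shows "module R (quot_mod M N)"
proof -
  note coset_ops = abelian_subgroup.a_rcos_sum[OF submodule_abelian_subgroup[OF assms]]
    smult_image_a_r_coset[OF assms]
  have cosetE: "\<And>U. U \<in> carrier (quot_mod M N) \<Longrightarrow> (\<And>u. u \<in> carrier M \<Longrightarrow> U = N +>\<^bsub>M\<^esub> u \<Longrightarrow> P) \<Longrightarrow> P"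
    for P unfolding quot_mod_carrier by blast
  show ?thesis
  proof (rule moduleI)
    show "cring R" by (rule is_cring)
    show "abelian_group (quot_mod M N)" by (rule quot_mod_abelian_group[OF assms])
  next
    fix a x assume "a \<in> carrier R" "x \<in> carrier (quot_mod M N)"
    then show "a \<odot>\<^bsub>quot_mod M N\<^esub> x \<in> carrier (quot_mod M N)"
      by (auto elim!: cosetE simp: quot_mod_smult coset_ops quot_mod_carrier)
  next
    fix a b x assume "a \<in> carrier R" "b \<in> carrier R" "x \<in> carrier (quot_mod M N)"
    then show "(a \<oplus>\<^bsub>R\<^esub> b) \<odot>\<^bsub>quot_mod M N\<^esub> x
        = a \<odot>\<^bsub>quot_mod M N\<^esub> x \<oplus>\<^bsub>quot_mod M N\<^esub> b \<odot>\<^bsub>quot_mod M N\<^esub> x"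
      and "(a \<otimes>\<^bsub>R\<^esub> b) \<odot>\<^bsub>quot_mod M N\<^esub> x = a \<odot>\<^bsub>quot_mod M N\<^esub> (b \<odot>\<^bsub>quot_mod M N\<^esub> x)"
      by (auto elim!: cosetE simp: quot_mod_smult quot_mod_add coset_ops smult_l_distr smult_assoc1)
  next
    fix x assume "x \<in> carrier (quot_mod M N)"
    then show "\<one>\<^bsub>R\<^esub> \<odot>\<^bsub>quot_mod M N\<^esub> x = x"
      by (auto elim!: cosetE simp: quot_mod_smult coset_ops)
  next
    fix a x y assume "a \<in> carrier R" "x \<in> carrier (quot_mod M N)" "y \<in> carrier (quot_mod M N)"
    then show "a \<odot>\<^bsub>quot_mod M N\<^esub> (x \<oplus>\<^bsub>quot_mod M N\<^esub> y)
        = a \<odot>\<^bsub>quot_mod M N\<^esub> x \<oplus>\<^bsub>quot_mod M N\<^esub> a \<odot>\<^bsub>quot_mod M N\<^esub> y"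
      by (auto elim!: cosetE simp: quot_mod_smult quot_mod_add coset_ops smult_r_distr)
  qed
qed

lemma submodule_pmult:
  assumes "submodule S R M" "p \<in> carrier R"
  shows "submodule (pmult R M p j S) R M"
proof -
  note S = submoduleD[OF assms(1)]
  have pj: "p [^]\<^bsub>R\<^esub> j \<in> carrier R" using assms(2) by simp
  have carrierS: "\<And>x. x \<in> S \<Longrightarrow> x \<in> carrier M" using S(1) by blast
  show ?thesis unfolding pmult_def
  proof (rule submoduleI)
    show "(\<odot>\<^bsub>M\<^esub>) (p [^]\<^bsub>R\<^esub> j) ` S \<subseteq> carrier M" using S(1) pj by auto
    show "\<zero>\<^bsub>M\<^esub> \<in> (\<odot>\<^bsub>M\<^esub>) (p [^]\<^bsub>R\<^esub> j) ` S"
      using S(2) pj by (intro image_eqI[of _ _ "\<zero>\<^bsub>M\<^esub>"]) auto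
  next
    fix a assume "a \<in> (\<odot>\<^bsub>M\<^esub>) (p [^]\<^bsub>R\<^esub> j) ` S"
    then obtain x where "x \<in> S" "a = p [^]\<^bsub>R\<^esub> j \<odot>\<^bsub>M\<^esub> x" by blast
    moreover have "\<ominus>\<^bsub>M\<^esub> a = p [^]\<^bsub>R\<^esub> j \<odot>\<^bsub>M\<^esub> (\<ominus>\<^bsub>M\<^esub> x)"
      using calculation carrierS pj by (simp add: smult_r_minus)
    ultimately show "\<ominus>\<^bsub>M\<^esub> a \<in> (\<odot>\<^bsub>M\<^esub>) (p [^]\<^bsub>R\<^esub> j) ` S" using S(4) by blast
  next
    fix a b assume "a \<in> (\<odot>\<^bsub>M\<^esub>) (p [^]\<^bsub>R\<^esub> j) ` S" "b \<in> (\<odot>\<^bsub>M\<^esub>) (p [^]\<^bsub>R\<^esub> j) ` S"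
    then obtain x y where "x \<in> S" "a = p [^]\<^bsub>R\<^esub> j \<odot>\<^bsub>M\<^esub> x" "y \<in> S" "b = p [^]\<^bsub>R\<^esub> j \<odot>\<^bsub>M\<^esub> y"
      by blast
    moreover have "a \<oplus>\<^bsub>M\<^esub> b = p [^]\<^bsub>R\<^esub> j \<odot>\<^bsub>M\<^esub> (x \<oplus>\<^bsub>M\<^esub> y)"
      using calculation carrierS pj by (simp add: smult_r_distr)
    ultimately show "a \<oplus>\<^bsub>M\<^esub> b \<in> (\<odot>\<^bsub>M\<^esub>) (p [^]\<^bsub>R\<^esub> j) ` S" using S(3) by blast
  next
    fix r a assume r: "r \<in> carrier R" and "a \<in> (\<odot>\<^bsub>M\<^esub>) (p [^]\<^bsub>R\<^esub> j) ` S"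
    then obtain x where "x \<in> S" "a = p [^]\<^bsub>R\<^esub> j \<odot>\<^bsub>M\<^esub> x" by blast
    moreover have "r \<odot>\<^bsub>M\<^esub> a = p [^]\<^bsub>R\<^esub> j \<odot>\<^bsub>M\<^esub> (r \<odot>\<^bsub>M\<^esub> x)"
      using calculation carrierS pj r by (simp add: smult_assoc1[symmetric] m_comm)
    ultimately show "r \<odot>\<^bsub>M\<^esub> a \<in> (\<odot>\<^bsub>M\<^esub>) (p [^]\<^bsub>R\<^esub> j) ` S" using S(5) r by blast
  qed
qed

lemma pmult_add:
  assumes "S \<subseteq> carrier M" "p \<in> carrier R"
  shows "pmult R M p (i + j) S = pmult R M p i (pmult R M p j S)"
proof -
  have "p [^]\<^bsub>R\<^esub> (i + j) \<odot>\<^bsub>M\<^esub> x = p [^]\<^bsub>R\<^esub> i \<odot>\<^bsub>M\<^esub> (p [^]\<^bsub>R\<^esub> j \<odot>\<^bsub>M\<^esub> x)" if "x \<in> S" for x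
    using that assms by (simp add: smult_assoc1 subset_iff nat_pow_mult[symmetric])
  then show ?thesis unfolding pmult_def by (auto simp: image_image)
qed

lemma pmult_antimono:
  assumes "submodule S R M" "p \<in> carrier R" "i \<le> j"
  shows "pmult R M p j S \<subseteq> pmult R M p i S"
proof -
  have "pmult R M p j S = pmult R M p i (pmult R M p (j - i) S)"
    using pmult_add[OF submoduleD(1)[OF assms(1)] assms(2), of i "j - i"] assms(3) by simp
  moreover have "pmult R M p (j - i) S \<subseteq> S"
    using submoduleD[OF assms(1)] assms(2) unfolding pmult_def by auto
  ultimately show ?thesis unfolding pmult_def by auto
qed

lemma pmult_stable:
  assumes "S \<subseteq> carrier M" "p \<in> carrier R"
    and "pmult R M p (Suc n) S = pmult R M p n S"
  shows "pmult R M p (n + k) S = pmult R M p n S"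
proof (induction k)
  case (Suc k)
  have "pmult R M p (n + Suc k) S = pmult R M p 1 (pmult R M p (n + k) S)"
    using pmult_add[OF assms(1,2), of 1 "n + k"] by simp
  also have "\<dots> = pmult R M p (Suc n) S"
    using Suc pmult_add[OF assms(1,2), of 1 n] by simp
  finally show ?case using assms(3) by simp
qed simp

lemma pmult_eq_zero_if_annihilated:
  assumes "submodule A R M" "\<forall>x\<in>carrier M. p [^]\<^bsub>R\<^esub> n \<odot>\<^bsub>M\<^esub> x = \<zero>\<^bsub>M\<^esub>"
  shows "pmult R M p n A = {\<zero>\<^bsub>M\<^esub>}"
  using assms submoduleD(1,2)[OF assms(1)] unfolding pmult_def by force

lemma submodule_set_add:
  assumes "submodule S R M" "submodule T R M"
  shows "submodule (S <+>\<^bsub>M\<^esub> T) R M"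
proof -
  note S = submoduleD[OF assms(1)] and T = submoduleD[OF assms(2)]
  have carrierST: "\<And>x. x \<in> S \<Longrightarrow> x \<in> carrier M" "\<And>x. x \<in> T \<Longrightarrow> x \<in> carrier M"
    using S(1) T(1) by blast+
  show ?thesis
  proof (rule submoduleI)
    show "S <+>\<^bsub>M\<^esub> T \<subseteq> carrier M" unfolding set_add_eq using carrierST by auto
    have "\<zero>\<^bsub>M\<^esub> = \<zero>\<^bsub>M\<^esub> \<oplus>\<^bsub>M\<^esub> \<zero>\<^bsub>M\<^esub>" by simp
    then show "\<zero>\<^bsub>M\<^esub> \<in> S <+>\<^bsub>M\<^esub> T" unfolding set_add_eq using S(2) T(2) by blast
  next
    fix a assume "a \<in> S <+>\<^bsub>M\<^esub> T"
    then obtain u v where "u \<in> S" "v \<in> T" "a = u \<oplus>\<^bsub>M\<^esub> v" unfolding set_add_eq by blast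
    moreover have "\<ominus>\<^bsub>M\<^esub> a = \<ominus>\<^bsub>M\<^esub> u \<oplus>\<^bsub>M\<^esub> \<ominus>\<^bsub>M\<^esub> v"
      using calculation carrierST by (simp add: minus_add)
    ultimately show "\<ominus>\<^bsub>M\<^esub> a \<in> S <+>\<^bsub>M\<^esub> T" unfolding set_add_eq using S(4) T(4) by blast
  next
    fix a b assume "a \<in> S <+>\<^bsub>M\<^esub> T" "b \<in> S <+>\<^bsub>M\<^esub> T"
    then obtain u v u' v' where
      "u \<in> S" "v \<in> T" "a = u \<oplus>\<^bsub>M\<^esub> v" "u' \<in> S" "v' \<in> T" "b = u' \<oplus>\<^bsub>M\<^esub> v'"
      unfolding set_add_eq by blast
    moreover have "a \<oplus>\<^bsub>M\<^esub> b = (u \<oplus>\<^bsub>M\<^esub> u') \<oplus>\<^bsub>M\<^esub> (v \<oplus>\<^bsub>M\<^esub> v')"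
      using calculation carrierST by (simp add: a_ac)
    ultimately show "a \<oplus>\<^bsub>M\<^esub> b \<in> S <+>\<^bsub>M\<^esub> T" unfolding set_add_eq using S(3) T(3) by blast
  next
    fix r a assume r: "r \<in> carrier R" and "a \<in> S <+>\<^bsub>M\<^esub> T"
    then obtain u v where "u \<in> S" "v \<in> T" "a = u \<oplus>\<^bsub>M\<^esub> v" unfolding set_add_eq by blast
    moreover have "r \<odot>\<^bsub>M\<^esub> a = r \<odot>\<^bsub>M\<^esub> u \<oplus>\<^bsub>M\<^esub> r \<odot>\<^bsub>M\<^esub> v"
      using calculation carrierST r by (simp add: smult_r_distr)
    ultimately show "r \<odot>\<^bsub>M\<^esub> a \<in> S <+>\<^bsub>M\<^esub> T" unfolding set_add_eq using S(5) T(5) r by blast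
  qed
qed

lemma submodule_Int:
  assumes "submodule S R M" "submodule T R M"
  shows "submodule (S \<inter> T) R M"
  by (rule submoduleI) (use submoduleD[OF assms(1)] submoduleD[OF assms(2)] in auto)

lemma set_add_supset_left:
  assumes "S \<subseteq> carrier M" "submodule T R M"
  shows "S \<subseteq> S <+>\<^bsub>M\<^esub> T"
proof
  fix x assume x: "x \<in> S"
  then have "x = x \<oplus>\<^bsub>M\<^esub> \<zero>\<^bsub>M\<^esub>" using assms(1) by auto
  then show "x \<in> S <+>\<^bsub>M\<^esub> T" unfolding set_add_eq using x submoduleD(2)[OF assms(2)] by blast
qed

end

section \<open>Module isomorphisms\<close>

definition module_iso ::
    "('a, 'b) ring_scheme \<Rightarrow> ('a, 'c, 'd) module_scheme \<Rightarrow> ('a, 'e, 'f) module_scheme \<Rightarrow> ('c \<Rightarrow> 'e) \<Rightarrow> bool"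
  where "module_iso R M1 M2 f \<longleftrightarrow> bij_betw f (carrier M1) (carrier M2) \<and>
    (\<forall>x\<in>carrier M1. \<forall>y\<in>carrier M1. f (x \<oplus>\<^bsub>M1\<^esub> y) = f x \<oplus>\<^bsub>M2\<^esub> f y) \<and>
    (\<forall>r\<in>carrier R. \<forall>x\<in>carrier M1. f (r \<odot>\<^bsub>M1\<^esub> x) = r \<odot>\<^bsub>M2\<^esub> f x)"

lemma module_isoD:
  assumes "module_iso R M1 M2 f"
  shows "bij_betw f (carrier M1) (carrier M2)"
    and "\<And>x. x \<in> carrier M1 \<Longrightarrow> f x \<in> carrier M2"
    and "\<And>x y. x \<in> carrier M1 \<Longrightarrow> y \<in> carrier M1 \<Longrightarrow> f (x \<oplus>\<^bsub>M1\<^esub> y) = f x \<oplus>\<^bsub>M2\<^esub> f y"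
    and "\<And>r x. r \<in> carrier R \<Longrightarrow> x \<in> carrier M1 \<Longrightarrow> f (r \<odot>\<^bsub>M1\<^esub> x) = r \<odot>\<^bsub>M2\<^esub> f x"
  using assms unfolding module_iso_def bij_betw_def by auto

lemma module_iso_zero:
  assumes "module R M1" "module R M2" "module_iso R M1 M2 f"
  shows "f \<zero>\<^bsub>M1\<^esub> = \<zero>\<^bsub>M2\<^esub>"
proof -
  interpret M1: module R M1 by fact
  interpret M2: module R M2 by fact
  note f = module_isoD[OF assms(3)]
  have "f \<zero>\<^bsub>M1\<^esub> \<oplus>\<^bsub>M2\<^esub> f \<zero>\<^bsub>M1\<^esub> = f \<zero>\<^bsub>M1\<^esub> \<oplus>\<^bsub>M2\<^esub> \<zero>\<^bsub>M2\<^esub>"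
    using f(2,3)[of "\<zero>\<^bsub>M1\<^esub>"] by simp
  then show ?thesis using f(2)[of "\<zero>\<^bsub>M1\<^esub>"] by (metis M2.add.l_cancel M2.zero_closed M1.zero_closed)
qed

lemma module_iso_finsum:
  assumes "module R M1" "module R M2" "module_iso R M1 M2 f"
    and "h \<in> S \<rightarrow> carrier M1"
  shows "f (finsum M1 h S) = finsum M2 (f \<circ> h) S"
proof -
  interpret M1: module R M1 by fact
  interpret M2: module R M2 by fact
  note f = module_isoD[OF assms(3)]
  show ?thesis
  proof (cases "finite S")
    case False
    then show ?thesis using module_iso_zero[OF assms(1-3)] by (simp add: M1.finsum_infinite M2.finsum_infinite)
  next
    case True
    then show ?thesis using assms(4)
    proof (induction S rule: finite_induct)
      case (insert a F)
      then have "h \<in> F \<rightarrow> carrier M1" "h a \<in> carrier M1" by auto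
      with insert f(2,3) show ?case by (simp add: M2.finsum_insert Pi_iff)
    qed (simp add: module_iso_zero[OF assms(1-3)])
  qed
qed

lemma module_iso_inv:
  assumes "module R M1" "module_iso R M1 M2 f"
  shows "module_iso R M2 M1 (inv_into (carrier M1) f)"
proof -
  interpret M1: module R M1 by fact
  let ?g = "inv_into (carrier M1) f"
  note f = module_isoD[OF assms(2)]
  have g: "bij_betw ?g (carrier M2) (carrier M1)" by (rule bij_betw_inv_into[OF f(1)])
  then have gc: "\<And>y. y \<in> carrier M2 \<Longrightarrow> ?g y \<in> carrier M1" unfolding bij_betw_def by auto
  have fg: "\<And>y. y \<in> carrier M2 \<Longrightarrow> f (?g y) = y" using f(1) by (simp add: bij_betw_inv_into_right)
  have gf: "\<And>x. x \<in> carrier M1 \<Longrightarrow> ?g (f x) = x" using f(1) by (simp add: bij_betw_inv_into_left)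
  have "?g (x \<oplus>\<^bsub>M2\<^esub> y) = ?g x \<oplus>\<^bsub>M1\<^esub> ?g y" if "x \<in> carrier M2" "y \<in> carrier M2" for x y
  proof -
    have "?g x \<oplus>\<^bsub>M1\<^esub> ?g y = ?g (f (?g x \<oplus>\<^bsub>M1\<^esub> ?g y))" using gf gc that by simp
    also have "\<dots> = ?g (x \<oplus>\<^bsub>M2\<^esub> y)" using f(3) gc fg that by simp
    finally show ?thesis by simp
  qed
  moreover have "?g (r \<odot>\<^bsub>M2\<^esub> x) = r \<odot>\<^bsub>M1\<^esub> ?g x" if "r \<in> carrier R" "x \<in> carrier M2" for r x
  proof -
    have "r \<odot>\<^bsub>M1\<^esub> ?g x = ?g (f (r \<odot>\<^bsub>M1\<^esub> ?g x))" using gf gc that by simp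
    also have "\<dots> = ?g (r \<odot>\<^bsub>M2\<^esub> x)" using f(4) gc fg that by simp
    finally show ?thesis by simp
  qed
  ultimately show ?thesis using g unfolding module_iso_def by blast
qed

lemma module_iso_k_indep:
  assumes "module R M1" "module R M2" "module_iso R M1 M2 f" "k_indep R p M1 S"
  shows "k_indep R p M2 (f ` S)"
  unfolding k_indep_def
proof (intro conjI ballI impI)
  interpret M1: module R M1 by fact
  interpret M2: module R M2 by fact
  note f = module_isoD[OF assms(3)]
  have S: "S \<subseteq> carrier M1" using assms(4) unfolding k_indep_def by auto
  then have inj: "inj_on f S" using f(1) unfolding bij_betw_def by (meson inj_on_subset)
  show "f ` S \<subseteq> carrier M2" using f(2) S by auto
  fix c t assume c: "c \<in> f ` S \<rightarrow> carrier R"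
    and z: "(\<Oplus>\<^bsub>M2\<^esub>s\<in>f ` S. c s \<odot>\<^bsub>M2\<^esub> s) = \<zero>\<^bsub>M2\<^esub>" and t: "t \<in> f ` S"
  have terms: "(\<lambda>s. c (f s) \<odot>\<^bsub>M1\<^esub> s) \<in> S \<rightarrow> carrier M1" using c S by auto
  have "(\<Oplus>\<^bsub>M2\<^esub>s\<in>f ` S. c s \<odot>\<^bsub>M2\<^esub> s) = (\<Oplus>\<^bsub>M2\<^esub>s\<in>S. c (f s) \<odot>\<^bsub>M2\<^esub> f s)"
    using c f(2) S by (intro M2.finsum_reindex[OF _ inj]) auto
  also have "\<dots> = (\<Oplus>\<^bsub>M2\<^esub>s\<in>S. f (c (f s) \<odot>\<^bsub>M1\<^esub> s))"
    using c S f(2,4) by (intro M2.finsum_cong') (auto simp: Pi_def subset_iff)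
  also have "\<dots> = f (\<Oplus>\<^bsub>M1\<^esub>s\<in>S. c (f s) \<odot>\<^bsub>M1\<^esub> s)"
    using module_iso_finsum[OF assms(1-3) terms] by (simp add: comp_def)
  finally have "f (\<Oplus>\<^bsub>M1\<^esub>s\<in>S. c (f s) \<odot>\<^bsub>M1\<^esub> s) = f \<zero>\<^bsub>M1\<^esub>"
    using z module_iso_zero[OF assms(1-3)] by simp
  then have "(\<Oplus>\<^bsub>M1\<^esub>s\<in>S. c (f s) \<odot>\<^bsub>M1\<^esub> s) = \<zero>\<^bsub>M1\<^esub>"
    using f(1) terms M1.finsum_closed unfolding bij_betw_def inj_on_def by blast
  moreover have "(\<lambda>s. c (f s)) \<in> S \<rightarrow> carrier R" using c by auto
  moreover have indep: "\<forall>c\<in>S \<rightarrow> carrier R. (\<Oplus>\<^bsub>M1\<^esub>s\<in>S. c s \<odot>\<^bsub>M1\<^esub> s) = \<zero>\<^bsub>M1\<^esub>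
      \<longrightarrow> (\<forall>s\<in>S. c s \<in> cgenideal R p)"
    using assms(4) unfolding k_indep_def by blast
  ultimately have "\<forall>s\<in>S. c (f s) \<in> cgenideal R p"
    using bspec[OF indep, of "\<lambda>s. c (f s)"] by simp
  then show "c t \<in> cgenideal R p" using t by auto
qed

lemma module_iso_k_indep_ex:
  assumes "module R M1" "module R M2" "module_iso R M1 M2 f"
    and "finite S" "k_indep R p M1 S"
  shows "\<exists>S'. finite S' \<and> card S' = card S \<and> k_indep R p M2 S'"
proof -
  have "S \<subseteq> carrier M1" using assms(5) unfolding k_indep_def by auto
  then have "inj_on f S" using module_isoD(1)[OF assms(3)] unfolding bij_betw_def by (meson inj_on_subset)
  then show ?thesis using assms module_iso_k_indep[OF assms(1-3,5)] card_image
    by (intro exI[of _ "f ` S"]) auto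
qed

lemma module_iso_k_dim:
  assumes "module R M1" "module R M2" "module_iso R M1 M2 f"
  shows "k_dim R p M1 = k_dim R p M2"
proof -
  have "(\<exists>S. finite S \<and> card S = n \<and> k_indep R p M1 S) \<longleftrightarrow> (\<exists>S. finite S \<and> card S = n \<and> k_indep R p M2 S)"
    for n
    using module_iso_k_indep_ex[OF assms] module_iso_k_indep_ex[OF assms(2,1) module_iso_inv[OF assms(1,3)]]
    by metis
  then show ?thesis unfolding k_dim_def by simp
qed

lemma module_iso_restrict:
  assumes "module_iso R M1 M2 f" "C \<subseteq> carrier M1"
  shows "module_iso R (M1\<lparr>carrier := C\<rparr>) (M2\<lparr>carrier := f ` C\<rparr>) f"
  using assms unfolding module_iso_def bij_betw_def by (auto intro: inj_on_subset simp: subset_iff)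

lemma module_iso_pmult:
  assumes "module R M1" "module_iso R M1 M2 f" "S \<subseteq> carrier M1" "p \<in> carrier R"
  shows "f ` pmult R M1 p j S = pmult R M2 p j (f ` S)"
proof -
  interpret M1: module R M1 by fact
  have "f (p [^]\<^bsub>R\<^esub> j \<odot>\<^bsub>M1\<^esub> x) = p [^]\<^bsub>R\<^esub> j \<odot>\<^bsub>M2\<^esub> f x" if "x \<in> S" for x
    using module_isoD(4)[OF assms(2)] assms(3,4) that by auto
  then show ?thesis unfolding pmult_def by (auto simp: image_image)
qed

lemma module_iso_set_add:
  assumes "module R M1" "module R M2" "module_iso R M1 M2 f"
    and "U \<subseteq> carrier M1" "V \<subseteq> carrier M1"
  shows "f ` (U <+>\<^bsub>M1\<^esub> V) = f ` U <+>\<^bsub>M2\<^esub> f ` V"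
proof -
  interpret M1: module R M1 by fact
  interpret M2: module R M2 by fact
  have "f (u \<oplus>\<^bsub>M1\<^esub> v) = f u \<oplus>\<^bsub>M2\<^esub> f v" if "u \<in> U" "v \<in> V" for u v
    using module_isoD(3)[OF assms(3)] assms(4,5) that by auto
  then show ?thesis unfolding M1.set_add_eq M2.set_add_eq by (auto simp: image_iff) metis
qed

lemma module_iso_a_r_coset:
  assumes "module R M1" "module R M2" "module_iso R M1 M2 f"
    and "D \<subseteq> carrier M1" "a \<in> carrier M1"
  shows "f ` (D +>\<^bsub>M1\<^esub> a) = f ` D +>\<^bsub>M2\<^esub> f a"
proof -
  interpret M1: module R M1 by fact
  interpret M2: module R M2 by fact
  have "D +>\<^bsub>M1\<^esub> a = D <+>\<^bsub>M1\<^esub> {a}" "f ` D +>\<^bsub>M2\<^esub> f a = f ` D <+>\<^bsub>M2\<^esub> {f a}"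
    unfolding M1.a_r_coset_eq M1.set_add_eq M2.a_r_coset_eq M2.set_add_eq by auto
  then show ?thesis using module_iso_set_add[OF assms(1-4), of "{a}"] assms(5) by simp
qed

lemma module_iso_quot_mod:
  assumes "module R M1" "module R M2" "module_iso R M1 M2 f" "submodule D R M1"
  shows "module_iso R (quot_mod M1 D) (quot_mod M2 (f ` D)) (\<lambda>U. f ` U)"
proof -
  interpret M1: module R M1 by fact
  interpret M2: module R M2 by fact
  note f = module_isoD[OF assms(3)]
  have D: "D \<subseteq> carrier M1" by (rule M1.submoduleD(1)[OF assms(4)])
  note set_add = module_iso_set_add[OF assms(1-3)]
  have cosets: "\<And>U. U \<in> carrier (quot_mod M1 D) \<Longrightarrow> U \<subseteq> carrier M1"
    using M1.a_r_coset_subset[OF assms(4)] unfolding M1.quot_mod_carrier by auto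
  have "carrier M2 = f ` carrier M1" using f(1) unfolding bij_betw_def by auto
  then have "carrier (quot_mod M2 (f ` D)) = {f ` D +>\<^bsub>M2\<^esub> f a | a. a \<in> carrier M1}"
    unfolding M2.quot_mod_carrier by auto
  also have "\<dots> = (\<lambda>U. f ` U) ` carrier (quot_mod M1 D)"
    unfolding M1.quot_mod_carrier using module_iso_a_r_coset[OF assms(1-3) D] by auto
  finally have "carrier (quot_mod M2 (f ` D)) = (\<lambda>U. f ` U) ` carrier (quot_mod M1 D)" .
  moreover have "inj_on (\<lambda>U. f ` U) (carrier (quot_mod M1 D))"
    using f(1) cosets unfolding bij_betw_def by (meson inj_onI inj_on_image_eq_iff)
  moreover have "f ` (r \<odot>\<^bsub>quot_mod M1 D\<^esub> U) = r \<odot>\<^bsub>quot_mod M2 (f ` D)\<^esub> f ` U"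
    if "r \<in> carrier R" "U \<subseteq> carrier M1" for r U
  proof -
    have "f ` (r \<odot>\<^bsub>quot_mod M1 D\<^esub> U) = f ` ((\<lambda>y. r \<odot>\<^bsub>M1\<^esub> y) ` U) <+>\<^bsub>M2\<^esub> f ` D"
      unfolding M1.quot_mod_smult using that D by (intro set_add) auto
    also have "f ` ((\<lambda>y. r \<odot>\<^bsub>M1\<^esub> y) ` U) = (\<lambda>y. r \<odot>\<^bsub>M2\<^esub> y) ` f ` U"
      using that f(4) by (auto simp: image_image subset_iff)
    finally show ?thesis unfolding M2.quot_mod_smult .
  qed
  moreover have "f ` (U \<oplus>\<^bsub>quot_mod M1 D\<^esub> V) = f ` U \<oplus>\<^bsub>quot_mod M2 (f ` D)\<^esub> f ` V"
    if "U \<subseteq> carrier M1" "V \<subseteq> carrier M1" for U V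
    unfolding M1.quot_mod_add M2.quot_mod_add using set_add[OF that] .
  ultimately show ?thesis unfolding module_iso_def bij_betw_def using cosets by simp
qed

lemma (in module) submodule_pmult_of_pmult:
  assumes "p \<in> carrier R" "j \<le> i"
  shows "module R (M\<lparr>carrier := pmult R M p j (carrier M)\<rparr>)"
    and "submodule (pmult R M p i (carrier M)) R (M\<lparr>carrier := pmult R M p j (carrier M)\<rparr>)"
proof -
  note sub = submodule_pmult[OF carrier_is_submodule assms(1)]
  show C: "module R (M\<lparr>carrier := pmult R M p j (carrier M)\<rparr>)"
    by (rule submodule.submodule_is_module[OF sub module_axioms])
  show "submodule (pmult R M p i (carrier M)) R (M\<lparr>carrier := pmult R M p j (carrier M)\<rparr>)"
    using module.module_incl_imp_submodule[OF C] pmult_antimono[OF carrier_is_submodule assms]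
      submodule.submodule_is_module[OF sub module_axioms]
    by simp
qed

lemma module_iso_ptype:
  assumes "module R M1" "module R M2" "module_iso R M1 M2 f" "p \<in> carrier R"
  shows "ptype R p M1 = ptype R p M2"
proof -
  interpret M1: module R M1 by fact
  interpret M2: module R M2 by fact
  have "k_dim R p (quot_mod (M1\<lparr>carrier := pmult R M1 p j (carrier M1)\<rparr>) (pmult R M1 p i (carrier M1)))
      = k_dim R p (quot_mod (M2\<lparr>carrier := pmult R M2 p j (carrier M2)\<rparr>) (pmult R M2 p i (carrier M2)))"
    if "j \<le> i" for i j
  proof -
    let ?C = "pmult R M1 p j (carrier M1)" and ?D = "pmult R M1 p i (carrier M1)"
    have "carrier M2 = f ` carrier M1" using module_isoD(1)[OF assms(3)] unfolding bij_betw_def by auto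
    then have image: "f ` ?C = pmult R M2 p j (carrier M2)" "f ` ?D = pmult R M2 p i (carrier M2)"
      using module_iso_pmult[OF assms(1,3) _ assms(4)] by auto
    note sub1 = M1.submodule_pmult_of_pmult[OF assms(4) that]
    note sub2 = M2.submodule_pmult_of_pmult[OF assms(4) that, folded image]
    have "module_iso R (M1\<lparr>carrier := ?C\<rparr>) (M2\<lparr>carrier := f ` ?C\<rparr>) f"
      by (rule module_iso_restrict[OF assms(3) M1.submoduleD(1)[OF M1.submodule_pmult[OF M1.carrier_is_submodule assms(4)]]])
    then have "module_iso R (quot_mod (M1\<lparr>carrier := ?C\<rparr>) ?D) (quot_mod (M2\<lparr>carrier := f ` ?C\<rparr>) (f ` ?D)) ((`) f)"
      by (rule module_iso_quot_mod[OF sub1(1) sub2(1) _ sub1(2)])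
    then have "k_dim R p (quot_mod (M1\<lparr>carrier := ?C\<rparr>) ?D)
        = k_dim R p (quot_mod (M2\<lparr>carrier := f ` ?C\<rparr>) (f ` ?D))"
      by (rule module_iso_k_dim[OF module.quot_mod_is_module[OF sub1] module.quot_mod_is_module[OF sub2]])
    then show ?thesis unfolding image .
  qed
  then show ?thesis unfolding ptype_def by (intro arg_cong[where f = conjp] ext) simp
qed

section \<open>The third isomorphism theorem\<close>

locale quotient_module = module R M for R :: "('a, 'b) ring_scheme" and M :: "('a, 'c, 'd) module_scheme" +
  fixes N
  assumes submodule_N: "submodule N R M"
begin

abbreviation Q where "Q \<equiv> quot_mod M N"
abbreviation proj where "proj \<equiv> \<lambda>a. N +>\<^bsub>M\<^esub> a"

lemma module_Q: "module R Q"
  by (rule quot_mod_is_module[OF submodule_N])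

lemma proj_add: "a \<in> carrier M \<Longrightarrow> b \<in> carrier M \<Longrightarrow> proj a \<oplus>\<^bsub>Q\<^esub> proj b = proj (a \<oplus>\<^bsub>M\<^esub> b)"
  by (simp add: quot_mod_add abelian_subgroup.a_rcos_sum[OF submodule_abelian_subgroup[OF submodule_N]])

lemma proj_smult: "r \<in> carrier R \<Longrightarrow> a \<in> carrier M \<Longrightarrow> r \<odot>\<^bsub>Q\<^esub> proj a = proj (r \<odot>\<^bsub>M\<^esub> a)"
  by (simp add: quot_mod_smult smult_image_a_r_coset[OF submodule_N])

lemma carrier_Q: "carrier Q = proj ` carrier M"
  unfolding quot_mod_carrier by blast

lemma proj_eq_zero_iff: "a \<in> carrier M \<Longrightarrow> proj a = \<zero>\<^bsub>Q\<^esub> \<longleftrightarrow> a \<in> N"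
  by (simp add: quot_mod_zero a_r_coset_eq_self_iff[OF submodule_N])

lemma pmult_image_proj:
  assumes "S \<subseteq> carrier M" "p \<in> carrier R"
  shows "pmult R Q p j (proj ` S) = proj ` pmult R M p j S"
  using assms proj_smult unfolding pmult_def by (auto simp: image_image subset_iff)

lemma set_add_image_proj:
  assumes "S \<subseteq> carrier M" "T \<subseteq> carrier M"
  shows "proj ` S <+>\<^bsub>Q\<^esub> proj ` T = proj ` (S <+>\<^bsub>M\<^esub> T)"
proof -
  have "proj u \<oplus>\<^bsub>Q\<^esub> proj v = proj (u \<oplus>\<^bsub>M\<^esub> v)" if "u \<in> S" "v \<in> T" for u v
    using that assms by (intro proj_add) auto
  then show ?thesis unfolding module.set_add_eq[OF module_Q] set_add_eq by (auto simp: image_iff) metis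
qed

lemma Int_image_proj:
  assumes "submodule W R M" "N \<subseteq> W" "T \<subseteq> carrier M"
  shows "proj ` W \<inter> proj ` T = proj ` (W \<inter> T)"
proof (intro Set.set_eqI iffI)
  fix z assume "z \<in> proj ` W \<inter> proj ` T"
  then obtain w t where wt: "w \<in> W" "t \<in> T" "z = proj w" "z = proj t" by blast
  then have "t \<in> proj w" using assms(3) abelian_subgroup.a_rcos_self[OF submodule_abelian_subgroup[OF submodule_N]]
    by auto
  then obtain n where "n \<in> N" "t = n \<oplus>\<^bsub>M\<^esub> w" unfolding a_r_coset_eq by blast
  then have "t \<in> W" using submoduleD(3)[OF assms(1)] assms(2) wt(1) by auto
  then show "z \<in> proj ` (W \<inter> T)" using wt by blast
qed auto

lemma submodule_image_proj:
  assumes "submodule W R M"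
  shows "submodule (proj ` W) R Q"
proof -
  interpret Q: module R Q by (rule module_Q)
  note W = submoduleD[OF assms]
  have carrierW: "\<And>x. x \<in> W \<Longrightarrow> x \<in> carrier M" using W(1) by blast
  have proj_minus: "\<ominus>\<^bsub>Q\<^esub> proj x = proj (\<ominus>\<^bsub>M\<^esub> x)" if "x \<in> carrier M" for x
  proof (rule Q.minus_equality)
    show "proj (\<ominus>\<^bsub>M\<^esub> x) \<oplus>\<^bsub>Q\<^esub> proj x = \<zero>\<^bsub>Q\<^esub>"
      using that proj_add proj_eq_zero_iff submoduleD(2)[OF submodule_N] by (simp add: l_neg)
  qed (use that carrier_Q in auto)
  show ?thesis
  proof (rule Q.submoduleI)
    show "proj ` W \<subseteq> carrier Q" using W(1) carrier_Q by auto
    show "\<zero>\<^bsub>Q\<^esub> \<in> proj ` W"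
      using W(2) proj_eq_zero_iff submoduleD(2)[OF submodule_N] by (metis image_eqI zero_closed)
  next
    fix a assume "a \<in> proj ` W"
    then show "\<ominus>\<^bsub>Q\<^esub> a \<in> proj ` W" using proj_minus carrierW W(4) by auto
  next
    fix a b assume "a \<in> proj ` W" "b \<in> proj ` W"
    then show "a \<oplus>\<^bsub>Q\<^esub> b \<in> proj ` W" using proj_add carrierW W(3) by auto
  next
    fix r a assume "r \<in> carrier R" "a \<in> proj ` W"
    then show "r \<odot>\<^bsub>Q\<^esub> a \<in> proj ` W" using proj_smult carrierW W(5) by auto
  qed
qed

lemma a_r_coset_image_proj:
  assumes "W \<subseteq> carrier M" "a \<in> carrier M"
  shows "proj ` W +>\<^bsub>Q\<^esub> proj a = proj ` (W +>\<^bsub>M\<^esub> a)"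
proof -
  have "proj ` W +>\<^bsub>Q\<^esub> proj a = proj ` W <+>\<^bsub>Q\<^esub> proj ` {a}"
    unfolding module.a_r_coset_eq[OF module_Q] module.set_add_eq[OF module_Q] by auto
  also have "\<dots> = proj ` (W <+>\<^bsub>M\<^esub> {a})" using assms by (intro set_add_image_proj) auto
  also have "W <+>\<^bsub>M\<^esub> {a} = W +>\<^bsub>M\<^esub> a" unfolding a_r_coset_eq set_add_eq by auto
  finally show ?thesis .
qed

lemma Union_image_proj_a_r_coset:
  assumes "submodule W R M" "N \<subseteq> W" "a \<in> carrier M"
  shows "\<Union> (proj ` (W +>\<^bsub>M\<^esub> a)) = W +>\<^bsub>M\<^esub> a"
proof (intro Set.set_eqI iffI)
  note W = submoduleD[OF assms(1)]
  fix z assume "z \<in> \<Union> (proj ` (W +>\<^bsub>M\<^esub> a))"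
  then obtain x n where xn: "x \<in> W" "n \<in> N" "z = n \<oplus>\<^bsub>M\<^esub> (x \<oplus>\<^bsub>M\<^esub> a)" unfolding a_r_coset_eq by blast
  moreover have "x \<in> carrier M" "n \<in> carrier M" using xn W(1) assms(2) by auto
  ultimately have "z = (n \<oplus>\<^bsub>M\<^esub> x) \<oplus>\<^bsub>M\<^esub> a" using assms(3) by (simp add: a_assoc)
  moreover have "n \<oplus>\<^bsub>M\<^esub> x \<in> W" using W(3) xn assms(2) by auto
  ultimately show "z \<in> W +>\<^bsub>M\<^esub> a" unfolding a_r_coset_eq by blast
next
  fix z assume z: "z \<in> W +>\<^bsub>M\<^esub> a"
  then have "z \<in> proj z"
    using a_r_coset_subset[OF assms(1,3)] abelian_subgroup.a_rcos_self[OF submodule_abelian_subgroup[OF submodule_N]]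
    by auto
  then show "z \<in> \<Union> (proj ` (W +>\<^bsub>M\<^esub> a))" using z by blast
qed

lemma third_isomorphism:
  assumes "submodule W R M" "N \<subseteq> W"
  shows "module_iso R (quot_mod Q (proj ` W)) (quot_mod M W) (\<lambda>U. \<Union>U)"
proof -
  interpret Q: module R Q by (rule module_Q)
  note W = submoduleD[OF assms(1)]
  note sub = submodule_image_proj[OF assms(1)]
  have coset: "\<And>a. a \<in> carrier M \<Longrightarrow> proj ` W +>\<^bsub>Q\<^esub> proj a = proj ` (W +>\<^bsub>M\<^esub> a)"
    by (rule a_r_coset_image_proj[OF W(1)])
  note Union = Union_image_proj_a_r_coset[OF assms]
  have carrier: "carrier (quot_mod Q (proj ` W)) = {proj ` (W +>\<^bsub>M\<^esub> a) | a. a \<in> carrier M}"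
    unfolding Q.quot_mod_carrier carrier_Q using coset by blast
  have "bij_betw (\<lambda>U. \<Union>U) (carrier (quot_mod Q (proj ` W))) (carrier (quot_mod M W))"
  proof (rule bij_betw_byWitness[where f' = "\<lambda>V. proj ` V"])
    show "\<forall>U\<in>carrier (quot_mod Q (proj ` W)). proj ` \<Union> U = U"
      unfolding carrier using Union by auto
    show "\<forall>V\<in>carrier (quot_mod M W). \<Union> (proj ` V) = V"
      unfolding quot_mod_carrier using Union by auto
    show "(\<lambda>U. \<Union> U) ` carrier (quot_mod Q (proj ` W)) \<subseteq> carrier (quot_mod M W)"
      unfolding carrier quot_mod_carrier using Union by auto
    show "(`) proj ` carrier (quot_mod M W) \<subseteq> carrier (quot_mod Q (proj ` W))"
      unfolding carrier quot_mod_carrier by auto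
  qed
  moreover have "\<forall>U\<in>carrier (quot_mod Q (proj ` W)). \<forall>V\<in>carrier (quot_mod Q (proj ` W)).
      \<Union> (U \<oplus>\<^bsub>quot_mod Q (proj ` W)\<^esub> V) = \<Union> U \<oplus>\<^bsub>quot_mod M W\<^esub> \<Union> V"
  proof (intro ballI)
    fix U V assume "U \<in> carrier (quot_mod Q (proj ` W))" "V \<in> carrier (quot_mod Q (proj ` W))"
    then obtain a b where rep: "a \<in> carrier M" "U = proj ` (W +>\<^bsub>M\<^esub> a)"
      "b \<in> carrier M" "V = proj ` (W +>\<^bsub>M\<^esub> b)"
      unfolding carrier by blast
    have "U \<oplus>\<^bsub>quot_mod Q (proj ` W)\<^esub> V = (proj ` W +>\<^bsub>Q\<^esub> proj a) <+>\<^bsub>Q\<^esub> (proj ` W +>\<^bsub>Q\<^esub> proj b)"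
      using rep coset by (simp add: Q.quot_mod_add)
    also have "\<dots> = proj ` W +>\<^bsub>Q\<^esub> (proj a \<oplus>\<^bsub>Q\<^esub> proj b)"
      using rep carrier_Q by (intro abelian_subgroup.a_rcos_sum[OF Q.submodule_abelian_subgroup[OF sub]]) auto
    also have "\<dots> = proj ` (W +>\<^bsub>M\<^esub> (a \<oplus>\<^bsub>M\<^esub> b))" using rep coset proj_add by simp
    finally show "\<Union> (U \<oplus>\<^bsub>quot_mod Q (proj ` W)\<^esub> V) = \<Union> U \<oplus>\<^bsub>quot_mod M W\<^esub> \<Union> V"
      using rep Union abelian_subgroup.a_rcos_sum[OF submodule_abelian_subgroup[OF assms(1)]]
      by (simp add: quot_mod_add)
  qed
  moreover have "\<forall>r\<in>carrier R. \<forall>U\<in>carrier (quot_mod Q (proj ` W)).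
      \<Union> (r \<odot>\<^bsub>quot_mod Q (proj ` W)\<^esub> U) = r \<odot>\<^bsub>quot_mod M W\<^esub> \<Union> U"
  proof (intro ballI)
    fix r U assume "r \<in> carrier R" "U \<in> carrier (quot_mod Q (proj ` W))"
    then obtain a where rep: "r \<in> carrier R" "a \<in> carrier M" "U = proj ` (W +>\<^bsub>M\<^esub> a)"
      unfolding carrier by blast
    have "r \<odot>\<^bsub>quot_mod Q (proj ` W)\<^esub> U = (\<lambda>x. r \<odot>\<^bsub>Q\<^esub> x) ` (proj ` W +>\<^bsub>Q\<^esub> proj a) <+>\<^bsub>Q\<^esub> proj ` W"
      using rep coset by (simp add: Q.quot_mod_smult)
    also have "\<dots> = proj ` W +>\<^bsub>Q\<^esub> (r \<odot>\<^bsub>Q\<^esub> proj a)"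
      using rep carrier_Q by (intro Q.smult_image_a_r_coset[OF sub]) auto
    also have "\<dots> = proj ` (W +>\<^bsub>M\<^esub> (r \<odot>\<^bsub>M\<^esub> a))" using rep coset proj_smult by simp
    finally show "\<Union> (r \<odot>\<^bsub>quot_mod Q (proj ` W)\<^esub> U) = r \<odot>\<^bsub>quot_mod M W\<^esub> \<Union> U"
      using rep Union by (simp add: quot_mod_smult smult_image_a_r_coset[OF assms(1)])
  qed
  ultimately show ?thesis unfolding module_iso_def by blast
qed

lemma ptype_quot_image_proj:
  assumes "submodule W R M" "N \<subseteq> W" "p \<in> carrier R"
  shows "ptype R p (quot_mod Q (proj ` W)) = ptype R p (quot_mod M W)"
  using module_iso_ptype[OF module.quot_mod_is_module[OF module_Q submodule_image_proj[OF assms(1)]]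
      quot_mod_is_module[OF assms(1)] third_isomorphism[OF assms(1,2)] assms(3)] .

end

section \<open>Restriction of an embedding\<close>

locale embedding_restriction = module R M for R :: "('a, 'b) ring_scheme" and M :: "('a, 'c, 'd) module_scheme" +
  fixes p :: 'a and A :: "'c set" and l :: nat
  assumes p_carrier: "p \<in> carrier R" and submodule_A: "submodule A R M"
begin

sublocale quotient_module R M "pmult R M p l A"
  by (intro quotient_module.intro module_axioms quotient_module_axioms.intro
      submodule_pmult[OF submodule_A p_carrier])

lemma submodule_pmult_A: "submodule (pmult R M p i A) R M"
  by (rule submodule_pmult[OF submodule_A p_carrier])

lemma pmult_A_subset: "i \<le> j \<Longrightarrow> pmult R M p j A \<subseteq> pmult R M p i A"
  by (rule pmult_antimono[OF submodule_A p_carrier])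

lemma pmult_image_proj_A: "pmult R Q p i (proj ` A) = proj ` pmult R M p i A"
  by (rule pmult_image_proj[OF submoduleD(1)[OF submodule_A] p_carrier])

lemma pmult_image_proj_A_eq_zero_iff:
  "pmult R Q p i (proj ` A) = {\<zero>\<^bsub>Q\<^esub>} \<longleftrightarrow> pmult R M p i A \<subseteq> pmult R M p l A"
proof -
  have "pmult R M p i A \<subseteq> carrier M" "\<zero>\<^bsub>M\<^esub> \<in> pmult R M p i A"
    using submoduleD(1,2)[OF submodule_pmult_A] by auto
  then show ?thesis unfolding pmult_image_proj_A using proj_eq_zero_iff by auto
qed

lemma expo_quot:
  assumes "\<exists>n. pmult R M p n A = {\<zero>\<^bsub>M\<^esub>}" "l \<le> expo R p M A"
  shows "expo R p Q (proj ` A) = l"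
  unfolding expo_def pmult_image_proj_A_eq_zero_iff
proof (rule Least_equality)
  fix n assume n: "pmult R M p n A \<subseteq> pmult R M p l A"
  show "l \<le> n"
  proof (rule ccontr)
    assume "\<not> l \<le> n"
    then have "pmult R M p (Suc n) A = pmult R M p n A"
      using n pmult_A_subset[of "Suc n" l] pmult_A_subset[of n "Suc n"] by auto
    then have "pmult R M p (n + k) A = pmult R M p n A" for k
      by (rule pmult_stable[OF submoduleD(1)[OF submodule_A] p_carrier])
    from this[of "expo R p M A - n"] have "pmult R M p n A = {\<zero>\<^bsub>M\<^esub>}"
      using LeastI_ex[OF assms(1)] assms(2) \<open>\<not> l \<le> n\<close> unfolding expo_def by simp
    then have "expo R p M A \<le> n" unfolding expo_def by (rule Least_le)
    then show False using assms(2) \<open>\<not> l \<le> n\<close> by simp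
  qed
qed simp

lemma gam_quot: "i \<le> l \<Longrightarrow> gam R p Q (proj ` A) i = gam R p M A i"
  unfolding gam_def pmult_image_proj_A
  by (rule ptype_quot_image_proj[OF submodule_pmult_A pmult_A_subset p_carrier])

lemma gam2_quot:
  assumes "j \<le> l"
  shows "gam2 R p Q (proj ` A) j r = gam2 R p M A j r"
proof -
  let ?P = "pmult R M p (j - 2) A" and ?T = "pmult R M p r (carrier M)"
  have T: "submodule ?T R M" by (rule submodule_pmult[OF carrier_is_submodule p_carrier])
  have PT: "submodule (?P \<inter> ?T) R M" by (rule submodule_Int[OF submodule_pmult_A T])
  have pPT: "submodule (pmult R M p 1 (?P \<inter> ?T)) R M" by (rule submodule_pmult[OF PT p_carrier])
  let ?W = "pmult R M p j A <+>\<^bsub>M\<^esub> pmult R M p 1 (?P \<inter> ?T)"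
  have pmult_Q: "pmult R Q p r (carrier Q) = proj ` ?T"
    unfolding carrier_Q by (rule pmult_image_proj[OF subset_refl p_carrier])
  have "pmult R Q p (j - 2) (proj ` A) \<inter> pmult R Q p r (carrier Q) = proj ` (?P \<inter> ?T)"
    unfolding pmult_image_proj_A pmult_Q using assms
    by (intro Int_image_proj[OF submodule_pmult_A pmult_A_subset submoduleD(1)[OF T]]) simp
  then have "pmult R Q p j (proj ` A)
      <+>\<^bsub>Q\<^esub> pmult R Q p 1 (pmult R Q p (j - 2) (proj ` A) \<inter> pmult R Q p r (carrier Q))
      = proj ` ?W"
    unfolding pmult_image_proj_A
    using pmult_image_proj[OF submoduleD(1)[OF PT] p_carrier]
      set_add_image_proj[OF submoduleD(1)[OF submodule_pmult_A] submoduleD(1)[OF pPT]]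
    by simp
  moreover have "pmult R M p l A \<subseteq> ?W"
    using set_add_supset_left[OF submoduleD(1)[OF submodule_pmult_A] pPT] pmult_A_subset[OF assms]
    by blast
  ultimately show ?thesis unfolding gam2_def
    using ptype_quot_image_proj[OF submodule_set_add[OF submodule_pmult_A pPT] _ p_carrier] by simp
qed

lemma phi_quot:
  assumes "j \<le> l"
  shows "phi R p Q (proj ` A) j = phi R p M A j"
proof -
  have "skew R p Q (proj ` A) j = skew R p M A j"
    unfolding skew_def using gam_quot assms by simp
  moreover have "gam2 R p Q (proj ` A) j = gam2 R p M A j"
    using gam2_quot[OF assms] by (rule ext)
  ultimately show ?thesis unfolding phi_def phi_ok_def by simp
qed

end

lemma map_upt_eq_take_map_upt:
  assumes "l \<le> e" "\<And>i. a \<le> i \<Longrightarrow> i < l \<Longrightarrow> f i = g i"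
  shows "map f [a..<l] = take (l - a) (map g [a..<e])"
proof (cases "a \<le> l")
  case True
  then have "take (l - a) [a..<e] = [a..<l]" using assms(1) by simp
  then show ?thesis using assms(2) by (simp add: take_map)
qed simp

theorem lemma9:
  fixes R :: "('a, 'b) ring_scheme" and M :: "('a, 'c, 'd) module_scheme"
    and p :: 'a and A :: "'c set" and l :: nat
  assumes "principal_domain R"
    and "p \<in> carrier R" and "maximalideal (cgenideal R p) R"
    and "p_module R p M"
    and "submodule A R M"
    and "l \<le> expo R p M A"
  shows "klein R p (quot_mod M (pmult R M p l A)) ((\<lambda>a. a_r_coset M (pmult R M p l A) a) ` A)
         = restr (klein R p M A) l"
proof -
  interpret module R M using assms(4) unfolding p_module_def by blast
  interpret embedding_restriction R M p A l
    by (intro embedding_restriction.intro module_axioms embedding_restriction_axioms.intro assms(2,5))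
  have "\<exists>n. pmult R M p n A = {\<zero>\<^bsub>M\<^esub>}"
    using assms(4) pmult_eq_zero_if_annihilated[OF assms(5)] unfolding p_module_def by blast
  then have expo: "expo R p Q (proj ` A) = l" by (rule expo_quot[OF _ assms(6)])
  have "map (gam R p Q (proj ` A)) [0..<l + 1]
      = take (l + 1 - 0) (map (gam R p M A) [0..<expo R p M A + 1])"
    by (rule map_upt_eq_take_map_upt) (use assms(6) gam_quot in auto)
  moreover have "map (phi R p Q (proj ` A)) [2..<l + 1]
      = take (l + 1 - 2) (map (phi R p M A) [2..<expo R p M A + 1])"
    by (rule map_upt_eq_take_map_upt) (use assms(6) phi_quot in auto)
  ultimately show ?thesis unfolding klein_def restr_def expo by simp
qed

end
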